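(* Let $G=H\langle a\rangle$ be a group, where $H$ is a normal abelian subgroup of $G$. Then $a$ is an almost right Engel element of $G$ if and only if it is an almost left Engel element of $G$. In that case $\mathcal L(a)=\mathcal R(a)$.
   Context: Commutators: $[x,y]=x^{-1}y^{-1}xy$, left-normed, and $[x,{}_n\,y]=[x,y,\dots,y]$ with $y$ repeated $n$ times. A right Engel sink of $g\in G$ is a set $S$ such that for every $x\in G$ one has $[g,{}_n\,x]\in S$ for all sufficiently large $n$; a left Engel sink of $g$ is a set $S$ such that for every $x\in G$ one has $[x,{}_n\,g]\in S$ for all sufficiently large $n$. The element $g$ is almost right (resp. left) Engel if it has a finite right (resp. left) Engel sink; in that case $\mathcal R(g)$ (resp. $\mathcal L(g)$) denotes the minimal such finite sink. *)

theory Defs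
  imports "HOL-Algebra.Algebra"
begin

definition commutator :: "('a, 'b) monoid_scheme \<Rightarrow> 'a \<Rightarrow> 'a \<Rightarrow> 'a" where
  "commutator G x y = inv\<^bsub>G\<^esub> x \<otimes>\<^bsub>G\<^esub> inv\<^bsub>G\<^esub> y \<otimes>\<^bsub>G\<^esub> x \<otimes>\<^bsub>G\<^esub> y"

fun engel_comm :: "('a, 'b) monoid_scheme \<Rightarrow> 'a \<Rightarrow> 'a \<Rightarrow> nat \<Rightarrow> 'a" where
  "engel_comm G x y 0 = x"
| "engel_comm G x y (Suc n) = commutator G (engel_comm G x y n) y"

definition right_engel_sink :: "('a, 'b) monoid_scheme \<Rightarrow> 'a \<Rightarrow> 'a set \<Rightarrow> bool" where
  "right_engel_sink G g S \<longleftrightarrow>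
     (\<forall>x\<in>carrier G. \<exists>N. \<forall>n\<ge>N. engel_comm G g x n \<in> S)"

definition left_engel_sink :: "('a, 'b) monoid_scheme \<Rightarrow> 'a \<Rightarrow> 'a set \<Rightarrow> bool" where
  "left_engel_sink G g S \<longleftrightarrow>
     (\<forall>x\<in>carrier G. \<exists>N. \<forall>n\<ge>N. engel_comm G x g n \<in> S)"

definition almost_right_engel :: "('a, 'b) monoid_scheme \<Rightarrow> 'a \<Rightarrow> bool" where
  "almost_right_engel G g \<longleftrightarrow> (\<exists>S. finite S \<and> right_engel_sink G g S)"

definition almost_left_engel :: "('a, 'b) monoid_scheme \<Rightarrow> 'a \<Rightarrow> bool" where
  "almost_left_engel G g \<longleftrightarrow> (\<exists>S. finite S \<and> left_engel_sink G g S)"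

definition min_right_sink :: "('a, 'b) monoid_scheme \<Rightarrow> 'a \<Rightarrow> 'a set" where
  "min_right_sink G g = (THE S. finite S \<and> right_engel_sink G g S \<and>
      (\<forall>T. finite T \<and> right_engel_sink G g T \<longrightarrow> S \<subseteq> T))"

definition min_left_sink :: "('a, 'b) monoid_scheme \<Rightarrow> 'a \<Rightarrow> 'a set" where
  "min_left_sink G g = (THE S. finite S \<and> left_engel_sink G g S \<and>
      (\<forall>T. finite T \<and> left_engel_sink G g T \<longrightarrow> S \<subseteq> T))"

end

theory Submission
  imports Defs
begin

text \<open>
  Since \<open>G/H\<close> is cyclic, every commutator \<open>[a,x]\<close> lies in \<open>H\<close>, and \<open>\<phi>(u) = [u,a]\<close>
  (\<open>comm_a\<close> below) is an endomorphism of the abelian group \<open>H\<close>. The left Engel sequence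
  \<open>[x,\<^sub>n a]\<close> is the \<open>\<phi>\<close>-orbit of \<open>[x,a]\<close>. The right Engel sequence \<open>[a,\<^sub>n x]\<close> is the orbit
  of \<open>[a,x]\<close> under \<open>\<psi>\<^sub>x(u) = [u,x]\<close>, which commutes with \<open>\<phi>\<close> on \<open>H\<close>; moreover \<open>[w,x]\<close> is
  \<open>\<phi>\<close>-periodic whenever \<open>\<phi>(w)\<close> is. For \<open>x = a h\<^sup>-\<^sup>1\<close> one gets \<open>[a,x] = \<phi>(h)\<close> and \<open>\<psi>\<^sub>x = \<phi>\<close>
  on \<open>H\<close>. So a finite left or right Engel sink exists iff all \<open>\<phi>\<close>-orbits in \<open>H\<close> end in one
  finite set. By pigeonhole such orbits end in the set \<open>P\<close> of \<open>\<phi>\<close>-periodic points, which is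
  then finite; and a periodic point, recurring infinitely often, lies in every sink. Hence
  \<open>P\<close> is both the minimal left and the minimal right Engel sink.
\<close>

definition periodic_points :: "('a \<Rightarrow> 'a) \<Rightarrow> 'a set \<Rightarrow> 'a set" where
  "periodic_points f A = {p \<in> A. \<exists>m>0. (f ^^ m) p = p}"

definition orbits_end_in :: "('a \<Rightarrow> 'a) \<Rightarrow> 'a set \<Rightarrow> 'a set \<Rightarrow> bool" where
  "orbits_end_in f A S \<longleftrightarrow> (\<forall>x\<in>A. \<forall>\<^sub>F n in sequentially. (f ^^ n) x \<in> S)"

lemma funpow_in_invariant: "f ` A \<subseteq> A \<Longrightarrow> x \<in> A \<Longrightarrow> (f ^^ n) x \<in> A"
  by (induction n) auto

lemma funpow_eq_on_invariant:
  assumes "f ` A \<subseteq> A" "\<And>x. x \<in> A \<Longrightarrow> f x = g x" "x \<in> A"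
  shows "(f ^^ n) x = (g ^^ n) x"
proof (induction n)
  case (Suc n)
  have "(f ^^ Suc n) x = g ((f ^^ n) x)" using assms(2)[OF funpow_in_invariant[OF assms(1,3)]] by simp
  then show ?case using Suc.IH by simp
qed simp

lemma funpow_commute_on:
  assumes "f ` A \<subseteq> A" "\<And>x. x \<in> A \<Longrightarrow> f (g x) = g (f x)" "x \<in> A"
  shows "(f ^^ n) (g x) = g ((f ^^ n) x)"
  by (induction n) (simp_all add: assms(2) funpow_in_invariant[OF assms(1,3)])

lemma funpow_periodic: "(f ^^ m) p = p \<Longrightarrow> (f ^^ (m * k)) p = p"
  by (induction k) (simp_all add: funpow_add)

lemma periodic_points_image_subset:
  assumes "f ` A \<subseteq> A" "g ` A \<subseteq> A" "\<And>x. x \<in> A \<Longrightarrow> f (g x) = g (f x)"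
  shows "g ` periodic_points f A \<subseteq> periodic_points f A"
proof
  fix y assume "y \<in> g ` periodic_points f A"
  then obtain p m where p: "p \<in> A" "m > 0" "(f ^^ m) p = p" and y: "y = g p"
    by (auto simp: periodic_points_def)
  have "(f ^^ m) (g p) = g p" using funpow_commute_on[of f A g p m] assms p by simp
  then show "y \<in> periodic_points f A" using assms(2) p y by (auto simp: periodic_points_def)
qed

lemma periodic_point_in_eventual_set:
  assumes p: "p \<in> periodic_points f A" and ev: "\<forall>\<^sub>F n in sequentially. (f ^^ n) p \<in> S"
  shows "p \<in> S"
proof -
  obtain m where m: "m > 0" "(f ^^ m) p = p" using p by (auto simp: periodic_points_def)
  obtain N where "\<forall>n\<ge>N. (f ^^ n) p \<in> S" using ev by (auto simp: eventually_sequentially)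
  moreover have "m * N \<ge> N" using m(1) by simp
  ultimately show ?thesis using funpow_periodic[OF m(2), of N] by metis
qed

text \<open>Pigeonhole: an orbit that ends in a finite set repeats, and from then on it cycles.\<close>

lemma orbit_eventually_periodic:
  assumes fA: "f ` A \<subseteq> A" and x: "x \<in> A" and fin: "finite S"
    and ev: "\<forall>\<^sub>F n in sequentially. (f ^^ n) x \<in> S"
  shows "\<forall>\<^sub>F n in sequentially. (f ^^ n) x \<in> periodic_points f A"
proof -
  obtain N where N: "\<forall>n\<ge>N. (f ^^ n) x \<in> S" using ev by (auto simp: eventually_sequentially)
  define g where "g i = (f ^^ (N + i)) x" for i
  have "range g \<subseteq> S" using N by (auto simp: g_def)
  then have "finite (range g)" using fin finite_subset by blast
  then have "\<not> inj g" using finite_imageD infinite_UNIV_nat by blast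
  then obtain i j where ij: "i < j" "g i = g j"
    unfolding inj_def by (metis linorder_neqE_nat)
  define M where "M = N + i"
  have cycle: "(f ^^ (j - i)) ((f ^^ n) x) = (f ^^ n) x" if "n \<ge> M" for n
  proof -
    have "j - i + n = n - M + (N + j)" using that ij by (simp add: M_def)
    then have "(f ^^ (j - i)) ((f ^^ n) x) = (f ^^ (n - M)) ((f ^^ (N + j)) x)"
      by (metis comp_apply funpow_add)
    also have "\<dots> = (f ^^ (n - M)) ((f ^^ M) x)" using ij by (simp add: g_def M_def)
    also have "\<dots> = (f ^^ n) x" using that by (metis comp_apply funpow_add le_add_diff_inverse2)
    finally show ?thesis .
  qed
  have "j - i > 0" using ij by simp
  then have "\<forall>n\<ge>M. (f ^^ n) x \<in> periodic_points f A"
    unfolding periodic_points_def using cycle funpow_in_invariant[OF fA x] by blast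
  then show ?thesis by (auto simp: eventually_sequentially)
qed

lemma eventually_funpow_Suc:
  "(\<forall>\<^sub>F n in sequentially. (f ^^ n) (f x) \<in> S) \<longleftrightarrow> (\<forall>\<^sub>F n in sequentially. (f ^^ n) x \<in> S)"
  using eventually_sequentially_Suc[of "\<lambda>n. (f ^^ n) x \<in> S"] by (simp add: funpow_swap1)

lemma periodic_points_subset_if_orbits_end_in:
  assumes "orbits_end_in f A S"
  shows "periodic_points f A \<subseteq> S"
proof
  fix p assume p: "p \<in> periodic_points f A"
  then have "\<forall>\<^sub>F n in sequentially. (f ^^ n) p \<in> S"
    using assms by (simp add: orbits_end_in_def periodic_points_def)
  with p show "p \<in> S" by (rule periodic_point_in_eventual_set)
qed

lemma orbits_end_in_periodic_points:
  "f ` A \<subseteq> A \<Longrightarrow> finite S \<Longrightarrow> orbits_end_in f A S \<Longrightarrow> orbits_end_in f A (periodic_points f A)"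
  by (simp add: orbits_end_in_def orbit_eventually_periodic)

lemma the_least_finite_eq:
  assumes "finite P" "Q P" "\<And>T. finite T \<Longrightarrow> Q T \<Longrightarrow> P \<subseteq> T"
  shows "(THE S. finite S \<and> Q S \<and> (\<forall>T. finite T \<and> Q T \<longrightarrow> S \<subseteq> T)) = P"
  by (rule the_equality) (use assms in blast)+

lemma engel_comm_Suc_funpow:
  "engel_comm G x y (Suc n) = ((\<lambda>u. commutator G u y) ^^ n) (commutator G x y)"
  by (induction n) auto

lemma right_engel_sink_iff_eventually:
  "right_engel_sink G g S \<longleftrightarrow>
     (\<forall>x\<in>carrier G. \<forall>\<^sub>F n in sequentially. ((\<lambda>u. commutator G u x) ^^ n) (commutator G g x) \<in> S)"
proof -
  have "(\<forall>\<^sub>F n in sequentially. engel_comm G g x (Suc n) \<in> S) \<longleftrightarrow>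
      (\<exists>N. \<forall>n\<ge>N. engel_comm G g x n \<in> S)" for x
    unfolding eventually_sequentially_Suc[of "\<lambda>n. engel_comm G g x n \<in> S"] eventually_sequentially ..
  then show ?thesis by (simp only: right_engel_sink_def flip: engel_comm_Suc_funpow)
qed

lemma left_engel_sink_iff_eventually:
  "left_engel_sink G g S \<longleftrightarrow>
     (\<forall>x\<in>carrier G. \<forall>\<^sub>F n in sequentially. ((\<lambda>u. commutator G u g) ^^ n) (commutator G x g) \<in> S)"
proof -
  have "(\<forall>\<^sub>F n in sequentially. engel_comm G x g (Suc n) \<in> S) \<longleftrightarrow>
      (\<exists>N. \<forall>n\<ge>N. engel_comm G x g n \<in> S)" for x
    unfolding eventually_sequentially_Suc[of "\<lambda>n. engel_comm G x g n \<in> S"] eventually_sequentially ..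
  then show ?thesis by (simp only: left_engel_sink_def flip: engel_comm_Suc_funpow)
qed

definition conjugate :: "('a, 'b) monoid_scheme \<Rightarrow> 'a \<Rightarrow> 'a \<Rightarrow> 'a" where
  "conjugate G x u = inv\<^bsub>G\<^esub> x \<otimes>\<^bsub>G\<^esub> u \<otimes>\<^bsub>G\<^esub> x"

context group
begin

lemma mult_inv_cancel_left [simp]: "x \<in> carrier G \<Longrightarrow> y \<in> carrier G \<Longrightarrow> x \<otimes> (inv x \<otimes> y) = y"
  by (simp flip: m_assoc)

lemma inv_mult_cancel_left [simp]: "x \<in> carrier G \<Longrightarrow> y \<in> carrier G \<Longrightarrow> inv x \<otimes> (x \<otimes> y) = y"
  by (simp flip: m_assoc)

lemma conjugate_mult:
  "\<lbrakk>x \<in> carrier G; u \<in> carrier G; v \<in> carrier G\<rbrakk> \<Longrightarrow>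
     conjugate G x (u \<otimes> v) = conjugate G x u \<otimes> conjugate G x v"
  by (simp add: conjugate_def m_assoc)

lemma conjugate_inv: "x \<in> carrier G \<Longrightarrow> u \<in> carrier G \<Longrightarrow> conjugate G x (inv u) = inv (conjugate G x u)"
  by (simp add: conjugate_def m_assoc inv_mult_group)

lemma conjugate_conjugate:
  "\<lbrakk>x \<in> carrier G; y \<in> carrier G; u \<in> carrier G\<rbrakk> \<Longrightarrow>
     conjugate G y (conjugate G x u) = conjugate G (x \<otimes> y) u"
  by (simp add: conjugate_def m_assoc inv_mult_group)

lemma commutator_closed [simp]: "x \<in> carrier G \<Longrightarrow> y \<in> carrier G \<Longrightarrow> commutator G x y \<in> carrier G"
  by (simp add: commutator_def)

lemma commutator_eq_inv_mult_conjugate: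
  "u \<in> carrier G \<Longrightarrow> x \<in> carrier G \<Longrightarrow> commutator G u x = inv u \<otimes> conjugate G x u"
  by (simp add: commutator_def conjugate_def m_assoc)

lemma commutator_swap: "x \<in> carrier G \<Longrightarrow> y \<in> carrier G \<Longrightarrow> commutator G x y = inv (commutator G y x)"
  by (simp add: commutator_def m_assoc inv_mult_group)

lemma commutator_self [simp]: "x \<in> carrier G \<Longrightarrow> commutator G x x = \<one>"
  by (simp add: commutator_def m_assoc)

lemma commutator_inv_self [simp]: "x \<in> carrier G \<Longrightarrow> commutator G x (inv x) = \<one>"
  by (simp add: commutator_def m_assoc)

lemma commutator_inv_right:
  "w \<in> carrier G \<Longrightarrow> y \<in> carrier G \<Longrightarrow> commutator G w (inv y) = conjugate G (inv y) (inv (commutator G w y))"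
  by (simp add: commutator_def conjugate_def m_assoc inv_mult_group)

lemma commutator_mult_right:
  "\<lbrakk>w \<in> carrier G; x \<in> carrier G; y \<in> carrier G\<rbrakk> \<Longrightarrow>
     commutator G w (x \<otimes> y) = commutator G w y \<otimes> conjugate G y (commutator G w x)"
  by (simp add: commutator_def conjugate_def m_assoc inv_mult_group)

end

locale abelian_by_cyclic = normal H G for H and G (structure) +
  fixes a
  assumes H_commute: "x \<in> H \<Longrightarrow> y \<in> H \<Longrightarrow> x \<otimes> y = y \<otimes> x"
    and a_closed [simp]: "a \<in> carrier G"
    and generated_by_H_and_a: "carrier G = generate G (H \<union> {a})"
begin

lemma H_closed [simp]:
  "u \<in> H \<Longrightarrow> u \<in> carrier G" "\<one> \<in> H" "u \<in> H \<Longrightarrow> inv u \<in> H"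
  "u \<in> H \<Longrightarrow> v \<in> H \<Longrightarrow> u \<otimes> v \<in> H"
  by (simp_all add: mem_carrier m_inv_closed subgroup.one_closed[OF subgroup_axioms]
      subgroup.m_closed[OF subgroup_axioms])

lemma H_left_commute: "x \<in> H \<Longrightarrow> y \<in> H \<Longrightarrow> z \<in> H \<Longrightarrow> x \<otimes> (y \<otimes> z) = y \<otimes> (x \<otimes> z)"
  by (metis H_commute H_closed(1) m_assoc)

lemmas H_ac = m_assoc H_commute H_left_commute

lemma conjugate_in_H [simp]: "x \<in> carrier G \<Longrightarrow> u \<in> H \<Longrightarrow> conjugate G x u \<in> H"
  by (simp add: conjugate_def inv_op_closed1)

lemma conjugate_by_H: "x \<in> H \<Longrightarrow> u \<in> H \<Longrightarrow> conjugate G x u = u"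
  by (simp add: conjugate_def m_assoc H_commute[of u x])

lemma commutator_in_H_left: "u \<in> H \<Longrightarrow> x \<in> carrier G \<Longrightarrow> commutator G u x \<in> H"
  by (simp add: commutator_eq_inv_mult_conjugate)

lemma commutator_in_H_right: "w \<in> carrier G \<Longrightarrow> h \<in> H \<Longrightarrow> commutator G w h \<in> H"
proof -
  assume "w \<in> carrier G" "h \<in> H"
  moreover have "commutator G w h = conjugate G w (inv h) \<otimes> h"
    by (simp add: commutator_def conjugate_def)
  ultimately show ?thesis by simp
qed

lemma commutator_a_in_H: "x \<in> carrier G \<Longrightarrow> commutator G a x \<in> H"
  unfolding generated_by_H_and_a
proof (induction rule: generate.induct)
  case one
  then show ?case by (simp add: commutator_def)
next
  case (eng x y)
  then have "x \<in> carrier G" "y \<in> carrier G" using generated_by_H_and_a by auto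
  then show ?case using eng by (simp add: commutator_mult_right)
qed (auto simp: commutator_in_H_right)

lemma commutator_in_H_a: "x \<in> carrier G \<Longrightarrow> commutator G x a \<in> H"
  by (simp add: commutator_swap[of x a] commutator_a_in_H)

lemma commutator_of_H_eq_one: "u \<in> H \<Longrightarrow> v \<in> H \<Longrightarrow> commutator G u v = \<one>"
  by (simp add: commutator_def m_assoc H_commute[of u v])

definition comm_a :: "'a \<Rightarrow> 'a" where
  "comm_a u = commutator G u a"

abbreviation periodic_part :: "'a set" where
  "periodic_part \<equiv> periodic_points comm_a H"

lemma comm_a_eq: "u \<in> carrier G \<Longrightarrow> comm_a u = inv u \<otimes> conjugate G a u"
  by (simp add: comm_a_def commutator_eq_inv_mult_conjugate)

lemma comm_a_in_H [simp]: "u \<in> H \<Longrightarrow> comm_a u \<in> H"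
  by (simp add: comm_a_eq)

lemma comm_a_image: "comm_a ` H \<subseteq> H"
  by auto

lemma comm_a_one: "comm_a \<one> = \<one>"
  by (simp add: comm_a_def commutator_def)

lemma comm_a_mult: "u \<in> H \<Longrightarrow> v \<in> H \<Longrightarrow> comm_a (u \<otimes> v) = comm_a u \<otimes> comm_a v"
  by (simp add: comm_a_eq conjugate_mult inv_mult_group H_ac)

lemma comm_a_inv: "u \<in> H \<Longrightarrow> comm_a (inv u) = inv (comm_a u)"
  by (simp add: comm_a_eq conjugate_inv inv_mult_group H_ac)

lemma funpow_comm_a_mult:
  "u \<in> H \<Longrightarrow> v \<in> H \<Longrightarrow> (comm_a ^^ k) (u \<otimes> v) = (comm_a ^^ k) u \<otimes> (comm_a ^^ k) v"
  by (induction k) (simp_all add: comm_a_mult funpow_in_invariant[OF comm_a_image])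

lemma conjugate_conjugate_a:
  assumes x: "x \<in> carrier G" and v: "v \<in> H"
  shows "conjugate G x (conjugate G a v) = conjugate G a (conjugate G x v)"
proof -
  define c where "c = commutator G a x"
  have c: "c \<in> H" using commutator_a_in_H[OF x] by (simp add: c_def)
  have "a \<otimes> x = x \<otimes> a \<otimes> c" using x by (simp add: c_def commutator_def m_assoc)
  then have "conjugate G x (conjugate G a v) = conjugate G c (conjugate G (x \<otimes> a) v)"
    using x v c by (simp add: conjugate_conjugate)
  also have "\<dots> = conjugate G a (conjugate G x v)"
    using x v c by (simp add: conjugate_by_H conjugate_conjugate)
  finally show ?thesis .
qed

lemma comm_a_conjugate: "x \<in> carrier G \<Longrightarrow> u \<in> H \<Longrightarrow> comm_a (conjugate G x u) = conjugate G x (comm_a u)"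
  by (simp add: comm_a_eq conjugate_mult conjugate_inv conjugate_conjugate_a)

lemma comm_a_commutator: "x \<in> carrier G \<Longrightarrow> u \<in> H \<Longrightarrow> comm_a (commutator G u x) = commutator G (comm_a u) x"
  by (simp add: commutator_eq_inv_mult_conjugate comm_a_mult comm_a_inv comm_a_conjugate)

lemma one_periodic: "\<one> \<in> periodic_part"
  unfolding periodic_points_def using comm_a_one by (simp add: exI[of _ "1::nat"])

lemma mult_periodic:
  assumes "p \<in> periodic_part" "q \<in> periodic_part"
  shows "p \<otimes> q \<in> periodic_part"
proof -
  obtain m where m: "m > 0" "(comm_a ^^ m) p = p" "p \<in> H"
    using assms(1) by (auto simp: periodic_points_def)
  obtain k where k: "k > 0" "(comm_a ^^ k) q = q" "q \<in> H"
    using assms(2) by (auto simp: periodic_points_def)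
  have "(comm_a ^^ (m * k)) p = p" "(comm_a ^^ (k * m)) q = q"
    by (rule funpow_periodic[OF m(2)], rule funpow_periodic[OF k(2)])
  then have "(comm_a ^^ (m * k)) (p \<otimes> q) = p \<otimes> q"
    using m k by (simp add: funpow_comm_a_mult mult.commute)
  moreover have "m * k > 0" "p \<otimes> q \<in> H" using m k by simp_all
  ultimately show ?thesis unfolding periodic_points_def by blast
qed

lemma inv_periodic: "p \<in> periodic_part \<Longrightarrow> inv p \<in> periodic_part"
  using periodic_points_image_subset[OF comm_a_image, of "\<lambda>u. inv u"] by (auto simp: comm_a_inv)

lemma conjugate_periodic:
  assumes "x \<in> carrier G" "p \<in> periodic_part"
  shows "conjugate G x p \<in> periodic_part"
proof -
  have "conjugate G x ` periodic_part \<subseteq> periodic_part"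
    by (rule periodic_points_image_subset) (use assms(1) in \<open>auto simp: comm_a_conjugate\<close>)
  with assms(2) show ?thesis by blast
qed

lemma commutator_periodic:
  assumes w: "w \<in> H" "comm_a w \<in> periodic_part" and x: "x \<in> carrier G"
  shows "commutator G w x \<in> periodic_part"
  using x unfolding generated_by_H_and_a
proof (induction rule: generate.induct)
  case one
  then show ?case using w by (simp add: commutator_def one_periodic)
next
  case (incl h)
  then show ?case using w by (auto simp: commutator_of_H_eq_one one_periodic comm_a_def[symmetric])
next
  case (inv h)
  then show ?case
    using w by (auto simp: commutator_of_H_eq_one one_periodic commutator_inv_right
        conjugate_periodic inv_periodic comm_a_def[symmetric])
next
  case (eng y z)
  then have "y \<in> carrier G" "z \<in> carrier G" using generated_by_H_and_a by auto
  then show ?case using eng w by (simp add: commutator_mult_right mult_periodic conjugate_periodic)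
qed

lemma commutator_orbit_periodic:
  assumes x: "x \<in> carrier G"
  shows "v \<in> H \<Longrightarrow> (comm_a ^^ m) v \<in> periodic_part \<Longrightarrow> ((\<lambda>u. commutator G u x) ^^ m) v \<in> periodic_part"
proof (induction m arbitrary: v)
  case (Suc m)
  have "(comm_a ^^ m) (commutator G v x) = commutator G ((comm_a ^^ m) v) x"
    using funpow_commute_on[OF comm_a_image, of "\<lambda>u. commutator G u x"] x Suc.prems
    by (simp add: comm_a_commutator)
  also have "\<dots> \<in> periodic_part"
    using Suc.prems x funpow_in_invariant[OF comm_a_image]
    by (simp add: commutator_periodic funpow_swap1)
  finally have "((\<lambda>u. commutator G u x) ^^ m) (commutator G v x) \<in> periodic_part"
    using Suc.IH x Suc.prems by (simp add: commutator_in_H_left)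
  then show ?case by (simp only: funpow_Suc_right comp_apply)
qed simp

lemma comm_a_eq_fun: "(\<lambda>u. commutator G u a) = comm_a"
  by (rule ext) (simp add: comm_a_def)

lemma orbits_end_in_if_left_engel_sink:
  assumes "left_engel_sink G a S"
  shows "orbits_end_in comm_a H S"
  unfolding orbits_end_in_def
proof
  fix h assume "h \<in> H"
  then have "\<forall>\<^sub>F n in sequentially. (comm_a ^^ n) (comm_a h) \<in> S"
    using assms by (simp add: left_engel_sink_iff_eventually comm_a_eq_fun comm_a_def[symmetric])
  then show "\<forall>\<^sub>F n in sequentially. (comm_a ^^ n) h \<in> S"
    by (simp only: eventually_funpow_Suc)
qed

lemma orbits_end_in_if_right_engel_sink:
  assumes "right_engel_sink G a S"
  shows "orbits_end_in comm_a H S"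
  unfolding orbits_end_in_def
proof
  fix h assume h: "h \<in> H"
  define x where "x = a \<otimes> inv h"
  have x: "x \<in> carrier G" using h by (simp add: x_def)
  have comm_x: "comm_a u = commutator G u x" if "u \<in> H" for u
    using h that by (simp add: x_def commutator_mult_right commutator_of_H_eq_one
        conjugate_by_H comm_a_def[symmetric])
  have "commutator G a x = commutator G a (inv h)"
    using h by (simp add: x_def commutator_mult_right conjugate_def)
  also have "\<dots> = conjugate G a h \<otimes> inv h"
    using h by (simp add: commutator_def conjugate_def m_assoc)
  also have "\<dots> = comm_a h"
    using h by (simp add: comm_a_eq H_commute[of _ "inv h"])
  finally have a_x: "commutator G a x = comm_a h" .
  have "\<forall>\<^sub>F n in sequentially. ((\<lambda>u. commutator G u x) ^^ n) (commutator G a x) \<in> S"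
    using assms x unfolding right_engel_sink_iff_eventually by blast
  then have "\<forall>\<^sub>F n in sequentially. (comm_a ^^ n) (comm_a h) \<in> S"
    using h funpow_eq_on_invariant[OF comm_a_image comm_x] by (simp add: a_x)
  then show "\<forall>\<^sub>F n in sequentially. (comm_a ^^ n) h \<in> S"
    by (simp only: eventually_funpow_Suc)
qed

lemma left_engel_sink_periodic_part:
  assumes "orbits_end_in comm_a H periodic_part"
  shows "left_engel_sink G a periodic_part"
  using assms commutator_in_H_a
  by (simp add: left_engel_sink_iff_eventually orbits_end_in_def comm_a_eq_fun comm_a_def[symmetric])

lemma right_engel_sink_periodic_part:
  assumes "orbits_end_in comm_a H periodic_part"
  shows "right_engel_sink G a periodic_part"
  unfolding right_engel_sink_iff_eventually
proof
  fix x assume x: "x \<in> carrier G"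
  then have "\<forall>\<^sub>F n in sequentially. (comm_a ^^ n) (commutator G a x) \<in> periodic_part"
    using assms commutator_a_in_H by (simp add: orbits_end_in_def)
  then show "\<forall>\<^sub>F n in sequentially. ((\<lambda>u. commutator G u x) ^^ n) (commutator G a x) \<in> periodic_part"
    by (rule eventually_mono) (simp add: commutator_orbit_periodic x commutator_a_in_H)
qed

lemma orbits_end_in_finite_periodic_part:
  assumes "finite S" "orbits_end_in comm_a H S"
  shows "finite periodic_part \<and> orbits_end_in comm_a H periodic_part"
  using assms periodic_points_subset_if_orbits_end_in orbits_end_in_periodic_points[OF comm_a_image]
  by (meson finite_subset)

lemma almost_left_engel_iff:
  "almost_left_engel G a \<longleftrightarrow> finite periodic_part \<and> orbits_end_in comm_a H periodic_part"
  unfolding almost_left_engel_def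
  using orbits_end_in_finite_periodic_part orbits_end_in_if_left_engel_sink left_engel_sink_periodic_part
  by blast

lemma almost_right_engel_iff:
  "almost_right_engel G a \<longleftrightarrow> finite periodic_part \<and> orbits_end_in comm_a H periodic_part"
  unfolding almost_right_engel_def
  using orbits_end_in_finite_periodic_part orbits_end_in_if_right_engel_sink right_engel_sink_periodic_part
  by blast

lemma min_left_sink_eq_periodic_part:
  assumes "almost_left_engel G a"
  shows "min_left_sink G a = periodic_part"
  unfolding min_left_sink_def
proof (rule the_least_finite_eq)
  show "finite periodic_part" "left_engel_sink G a periodic_part"
    using assms by (simp_all add: almost_left_engel_iff left_engel_sink_periodic_part)
  show "periodic_part \<subseteq> T" if "finite T" "left_engel_sink G a T" for T
    using that(2) by (intro periodic_points_subset_if_orbits_end_in orbits_end_in_if_left_engel_sink)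
qed

lemma min_right_sink_eq_periodic_part:
  assumes "almost_right_engel G a"
  shows "min_right_sink G a = periodic_part"
  unfolding min_right_sink_def
proof (rule the_least_finite_eq)
  show "finite periodic_part" "right_engel_sink G a periodic_part"
    using assms by (simp_all add: almost_right_engel_iff right_engel_sink_periodic_part)
  show "periodic_part \<subseteq> T" if "finite T" "right_engel_sink G a T" for T
    using that(2) by (intro periodic_points_subset_if_orbits_end_in orbits_end_in_if_right_engel_sink)
qed

end

theorem lemma3p1:
  fixes G (structure) and H :: "'a set" and a :: 'a
  assumes "group G"
    and "H \<lhd> G"
    and "\<forall>x\<in>H. \<forall>y\<in>H. x \<otimes> y = y \<otimes> x"
    and "a \<in> carrier G"
    and "carrier G = generate G (H \<union> {a})"
  shows "(almost_right_engel G a \<longleftrightarrow> almost_left_engel G a) \<and>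
         (almost_right_engel G a \<longrightarrow> min_left_sink G a = min_right_sink G a)"
proof -
  interpret abelian_by_cyclic H G a
    using assms by (intro abelian_by_cyclic.intro) (auto simp: abelian_by_cyclic_axioms_def)
  show ?thesis
    using almost_left_engel_iff almost_right_engel_iff
      min_left_sink_eq_periodic_part min_right_sink_eq_periodic_part
    by simp
qed

end
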